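(* For all integers $m$ and $n$, \[ \sum_{k = (1+(-1)^n)/2}^n ( - 1)^{k - 1} L_{mk}^{\,4} = \frac{( - 1)^{n - 1}\,5F_{mn} F_{mn + m} \left\{ L_m L_{mn} L_{mn + m} + ( - 1)^{nm}4L_{2m} \right\}}{L_m L_{2m}}\,. \] (Here the summation starts at $k=1$ if $n$ is even and at $k=0$ if $n$ is odd.)
   Context: $F_i$ and $L_i$ denote the Fibonacci and Lucas numbers, defined for all $i\in\mathbb{Z}$ by $F_i=F_{i-1}+F_{i-2}$, $F_0=0$, $F_1=1$, and $L_i=L_{i-1}+L_{i-2}$, $L_0=2$, $L_1=1$; equivalently $F_{-i}=(-1)^{i-1}F_i$ and $L_{-i}=(-1)^iL_i$. Summation convention for an arbitrary integer upper limit: $\sum_{k=a}^{a-1} f(k)=0$, and for $n<a-1$, $\sum_{k=a}^{n} f(k) = -\sum_{k=n+1}^{a-1} f(k)$. *)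

theory Defs
  imports Complex_Main
begin

fun fibn :: "nat \<Rightarrow> int" where
  "fibn 0 = 0" | "fibn (Suc 0) = 1" | "fibn (Suc (Suc n)) = fibn (Suc n) + fibn n"

fun lucn :: "nat \<Rightarrow> int" where
  "lucn 0 = 2" | "lucn (Suc 0) = 1" | "lucn (Suc (Suc n)) = lucn (Suc n) + lucn n"

definition F :: "int \<Rightarrow> int" where
  "F i = (if i \<ge> 0 then fibn (nat i) else (-1) ^ (nat (-i) + 1) * fibn (nat (-i)))"

definition L :: "int \<Rightarrow> int" where
  "L i = (if i \<ge> 0 then lucn (nat i) else (-1) ^ nat (-i) * lucn (nat (-i)))"

definition gsum :: "(int \<Rightarrow> 'b::ab_group_add) \<Rightarrow> int \<Rightarrow> int \<Rightarrow> 'b" where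
  "gsum f a n = (if n \<ge> a - 1 then (\<Sum>k\<in>{a..n}. f k) else - (\<Sum>k\<in>{n+1..a-1}. f k))"

end

theory Submission
  imports Defs
begin

text \<open>With \<open>x = \<phi>\<^sup>m, y = \<psi>\<^sup>m\<close> and \<open>p = \<phi>\<^bsup>m(n-1)\<^esup>, q = \<psi>\<^bsup>m(n-1)\<^esup>\<close>, Binet's formulas turn
  the right-hand side at \<open>n - 1\<close> and at \<open>n\<close> into rational functions of \<open>x, y, p, q\<close>, where
  \<open>xy = (-1)\<^sup>m\<close> and \<open>pq = (-1)\<^bsup>m(n-1)\<^esup>\<close>. Under these two relations a polynomial identity shows
  that its increment is \<open>(-1)\<^bsup>n-1\<^esup>(L\<^sub>m\<^sub>n\<^sup>4 - 16)\<close>. The left-hand side has the same increment: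
  besides the new summand, the term \<open>-L\<^sub>0\<^sup>4 = -16\<close> enters or leaves the sum as the parity of
  \<open>n\<close> changes. Both sides vanish at \<open>n = 0\<close>, so they agree for all integers \<open>n\<close>.\<close>

definition phi :: real where "phi = (1 + sqrt 5) / 2"
definition psi :: real where "psi = (1 - sqrt 5) / 2"

lemma phi_psi:
  "phi * psi = -1" "phi * phi = phi + 1" "psi * psi = psi + 1" "phi - psi = sqrt 5" "phi + psi = 1"
  unfolding phi_def psi_def by (simp_all add: field_simps)

lemma phi_psi_nonzero: "phi \<noteq> 0" "psi \<noteq> 0"
  using phi_psi(1) by auto

lemma inverse_phi_psi: "inverse phi = - psi" "inverse psi = - phi"
  by (rule inverse_unique, simp add: phi_psi(1) mult.commute)+

lemma power_Suc_Suc_if_square: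
  fixes z :: "'a::comm_ring_1"
  assumes "z * z = z + 1"
  shows "z ^ Suc (Suc n) = z ^ Suc n + z ^ n"
proof -
  have "z ^ Suc (Suc n) = z ^ n * (z * z)" by (simp add: algebra_simps)
  then show ?thesis by (simp add: assms algebra_simps)
qed

lemma fibn_binet: "real_of_int (fibn n) = (phi ^ n - psi ^ n) / sqrt 5"
proof (induction n rule: fibn.induct)
  case (3 n)
  then show ?case
    using power_Suc_Suc_if_square[OF phi_psi(2), of n] power_Suc_Suc_if_square[OF phi_psi(3), of n]
    by (simp add: diff_divide_distrib add_divide_distrib)
qed (simp_all add: phi_psi(4))

lemma lucn_binet: "real_of_int (lucn n) = phi ^ n + psi ^ n"
proof (induction n rule: lucn.induct)
  case (3 n)
  then show ?case
    using power_Suc_Suc_if_square[OF phi_psi(2), of n] power_Suc_Suc_if_square[OF phi_psi(3), of n]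
    by simp
qed (simp_all add: phi_psi(5))

lemma power_int_phi_psi_neg:
  "phi powi (- int k) = (-1) ^ k * psi ^ k" "psi powi (- int k) = (-1) ^ k * phi ^ k"
proof -
  have "phi powi (- int k) = inverse phi ^ k" "psi powi (- int k) = inverse psi ^ k"
    by (simp_all only: power_int_minus power_int_of_nat power_inverse)
  then show "phi powi (- int k) = (-1) ^ k * psi ^ k" "psi powi (- int k) = (-1) ^ k * phi ^ k"
    unfolding inverse_phi_psi power_minus[of phi] power_minus[of psi] .
qed

lemma F_binet: "real_of_int (F i) = (phi powi i - psi powi i) / sqrt 5"
proof (cases "i \<ge> 0")
  case True
  then obtain k where "i = int k" using nonneg_int_cases by blast
  then show ?thesis by (simp add: F_def fibn_binet)
next
  case False
  then obtain k where k: "i = - int k" by (metis minus_minus nonneg_int_cases neg_0_le_iff_le nle_le)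
  then show ?thesis
    by (simp add: F_def fibn_binet power_int_phi_psi_neg algebra_simps diff_divide_distrib)
qed

lemma L_binet: "real_of_int (L i) = phi powi i + psi powi i"
proof (cases "i \<ge> 0")
  case True
  then obtain k where "i = int k" using nonneg_int_cases by blast
  then show ?thesis by (simp add: L_def lucn_binet)
next
  case False
  then obtain k where k: "i = - int k" by (metis minus_minus nonneg_int_cases neg_0_le_iff_le nle_le)
  then show ?thesis by (simp add: L_def lucn_binet power_int_phi_psi_neg algebra_simps)
qed

lemma lucn_pos: "lucn n > 0"
  by (induction n rule: lucn.induct) simp_all

lemma L_nonzero: "L i \<noteq> 0"
  unfolding L_def using lucn_pos by (simp add: less_imp_neq[symmetric])

lemma int_eq_if_diff_eq:
  fixes g h :: "int \<Rightarrow> 'a::ab_group_add"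
  assumes diff: "\<And>n. g n - g (n - 1) = h n - h (n - 1)" and "g 0 = h 0"
  shows "g n = h n"
proof (induction n rule: int_induct[where k = 0])
  case base
  show ?case by (fact \<open>g 0 = h 0\<close>)
next
  case (step1 i)
  then show ?case using diff[of "i + 1"] by (simp add: diff_eq_eq)
next
  case (step2 i)
  then show ?case using diff[of i] by (simp add: eq_diff_eq)
qed

lemma gsum_diff:
  fixes f :: "int \<Rightarrow> 'a::ab_group_add"
  shows "gsum f a n - gsum f a (n - 1) = f n"
proof -
  consider "n \<ge> a" | "n = a - 1" | "n < a - 1" by linarith
  then show ?thesis
  proof cases
    case 1
    then have "{a..n} = insert n {a..n - 1}" by auto
    with 1 show ?thesis unfolding gsum_def by simp
  next
    case 2
    then show ?thesis unfolding gsum_def by simp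
  next
    case 3
    then have "{n..a - 1} = insert n {n + 1..a - 1}" by auto
    with 3 show ?thesis unfolding gsum_def by simp
  qed
qed

lemma gsum_from_0:
  fixes f :: "int \<Rightarrow> 'a::ab_group_add"
  shows "gsum f 0 n = gsum f 1 n + f 0"
proof (rule int_eq_if_diff_eq[of "gsum f 0" "\<lambda>n. gsum f 1 n + f 0"])
  show "gsum f 0 n - gsum f 0 (n - 1) = (gsum f 1 n + f 0) - (gsum f 1 (n - 1) + f 0)" for n
    by (simp add: gsum_diff)
  show "gsum f 0 0 = gsum f 1 0 + f 0"
    by (simp add: gsum_def)
qed

lemma gsum_parity_start_diff:
  fixes f :: "int \<Rightarrow> 'a::ab_group_add"
  shows "gsum f (if even n then 1 else 0) n - gsum f (if even (n - 1) then 1 else 0) (n - 1)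
         = f n + (if even n then - f 0 else f 0)"
  using gsum_diff[of f 1 n] by (simp add: gsum_from_0 algebra_simps)

lemma lucas_quartic_identity:
  fixes x y p q e t :: "'a::idom"
  assumes "x * y = e" "e = 1 \<or> e = -1" "p * q = t" "t = 1 \<or> t = -1"
  shows "(p*x - q*y) * (p*x*x - q*y*y) * ((x+y) * (p*x + q*y) * (p*x*x + q*y*y) + 4*(t*e)*(x^2 + y^2))
       + (p - q) * (p*x - q*y) * ((x+y) * (p + q) * (p*x + q*y) + 4*t*(x^2 + y^2))
       = ((p*x + q*y)^4 - 16) * ((x + y) * (x^2 + y^2))"
  using assms by (elim disjE; simp; algebra)

definition lucas_quartic_closed_form :: "int \<Rightarrow> int \<Rightarrow> real" where
  "lucas_quartic_closed_form m n =
     (-1) powi (n - 1) * 5 * real_of_int (F (m * n)) * real_of_int (F (m * n + m))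
       * (real_of_int (L m * L (m * n) * L (m * n + m))
          + (-1) powi (n * m) * 4 * real_of_int (L (2 * m)))
     / (real_of_int (L m) * real_of_int (L (2 * m)))"

lemma lucas_quartic_closed_form_binet:
  assumes x: "x = phi powi m" and y: "y = psi powi m"
    and p: "p = phi powi (m * n)" and q: "q = psi powi (m * n)"
  shows "lucas_quartic_closed_form m n = (-1) powi (n - 1)
           * ((p - q) * (p*x - q*y) * ((x+y) * (p + q) * (p*x + q*y) + 4 * (-1) powi (m * n) * (x^2 + y^2)))
           / ((x + y) * (x^2 + y^2))"
proof -
  have shift: "phi powi (m * n + m) = p * x" "psi powi (m * n + m) = q * y"
    using phi_psi_nonzero by (simp_all add: x y p q power_int_add)
  have double: "phi powi (2 * m) = x^2" "psi powi (2 * m) = y^2"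
    unfolding x y mult.commute[of 2 m] power_int_mult by simp_all
  have FF: "c * 5 * real_of_int (F (m * n)) * real_of_int (F (m * n + m)) = c * ((p - q) * (p*x - q*y))"
    for c
    unfolding F_binet shift p[symmetric] q[symmetric] by (simp add: field_simps)
  have LL: "real_of_int (L (m * n + m)) = p*x + q*y" "real_of_int (L (2 * m)) = x^2 + y^2"
    "real_of_int (L m) = x + y" "real_of_int (L (m * n)) = p + q"
    by (simp_all add: L_binet shift double x y p q)
  show ?thesis
    unfolding lucas_quartic_closed_form_def of_int_mult FF LL mult.commute[of n m] by (simp add: mult_ac)
qed

lemma lucas_quartic_closed_form_diff:
  "lucas_quartic_closed_form m n - lucas_quartic_closed_form m (n - 1)
     = (-1) powi (n - 1) * real_of_int (L (m * n)) ^ 4 + 16 * (-1) powi n"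
proof -
  define x y p q where "x = phi powi m" and "y = psi powi m"
    and "p = phi powi (m * (n - 1))" and "q = psi powi (m * (n - 1))"
  define e t :: real where "e = (-1) powi m" and "t = (-1) powi (m * (n - 1))"
  define s :: real where "s = (-1) powi (n - 1)"
  have xy: "x * y = e" and pq: "p * q = t"
    unfolding x_def y_def p_def q_def e_def t_def power_int_mult_distrib[symmetric] phi_psi(1) by simp_all
  have signs: "e = 1 \<or> e = -1" "t = 1 \<or> t = -1"
    unfolding e_def t_def by (simp_all add: power_int_minus_left)
  have mn: "m * n = m * (n - 1) + m" by (simp add: algebra_simps)
  have shift: "phi powi (m * n) = p * x" "psi powi (m * n) = q * y" "(-1::real) powi (m * n) = t * e"
    unfolding mn x_def y_def p_def q_def e_def t_def using phi_psi_nonzero by (simp_all add: power_int_add)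
  have L_mn: "real_of_int (L (m * n)) = p * x + q * y"
    unfolding L_binet shift ..
  have "real_of_int (L m * L (2 * m)) = (x + y) * (x^2 + y^2)"
    unfolding x_def y_def of_int_mult L_binet mult.commute[of 2 m] power_int_mult by simp
  then have D: "(x + y) * (x^2 + y^2) \<noteq> 0"
    using L_nonzero by (metis mult_eq_0_iff of_int_eq_0_iff)
  have sign: "(-1::real) powi (n - 1 - 1) = - s"
    unfolding s_def by (simp add: power_int_minus_left)
  have combine: "s * a / d - (- s) * b / d = s * (a + b) / d" for a b d
    by (simp add: distrib_left add_divide_distrib)
  have "lucas_quartic_closed_form m n - lucas_quartic_closed_form m (n - 1)
      = s * ((p*x - q*y) * (p*x*x - q*y*y)
               * ((x+y) * (p*x + q*y) * (p*x*x + q*y*y) + 4 * (t*e) * (x^2 + y^2))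
             + (p - q) * (p*x - q*y) * ((x+y) * (p + q) * (p*x + q*y) + 4 * t * (x^2 + y^2)))
          / ((x + y) * (x^2 + y^2))"
    unfolding lucas_quartic_closed_form_binet[OF x_def y_def shift(1,2)[symmetric]]
      lucas_quartic_closed_form_binet[OF x_def y_def p_def q_def] shift(3) t_def[symmetric]
      s_def[symmetric] sign
    by (rule combine)
  also have "\<dots> = s * (((p*x + q*y)^4 - 16) * ((x + y) * (x^2 + y^2))) / ((x + y) * (x^2 + y^2))"
    unfolding lucas_quartic_identity[OF xy signs(1) pq signs(2)] ..
  also have "\<dots> = s * ((p*x + q*y)^4 - 16)"
    using D by simp
  also have "\<dots> = (-1) powi (n - 1) * real_of_int (L (m * n)) ^ 4 + 16 * (-1) powi n"
    unfolding L_mn s_def by (simp add: power_int_minus_left algebra_simps)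
  finally show ?thesis .
qed

theorem theorem4:
  fixes m n :: int
  shows "gsum (\<lambda>k. (-1) powi (k - 1) * (real_of_int (L (m * k)))^4)
               (if even n then 1 else 0) n
         = (-1) powi (n - 1) * 5 * real_of_int (F (m * n)) * real_of_int (F (m * n + m))
             * (real_of_int (L m * L (m * n) * L (m * n + m))
                + (-1) powi (n * m) * 4 * real_of_int (L (2 * m)))
           / (real_of_int (L m) * real_of_int (L (2 * m)))"
proof -
  define f where "f k = (-1) powi (k - 1) * (real_of_int (L (m * k)))^4" for k
  have f0: "f 0 = -16"
    by (simp add: f_def L_def)
  have "gsum f (if even n then 1 else 0) n = lucas_quartic_closed_form m n"
  proof (rule int_eq_if_diff_eq[of "\<lambda>n. gsum f (if even n then 1 else 0) n"])
    show "gsum f (if even n then 1 else 0) n - gsum f (if even (n - 1) then 1 else 0) (n - 1)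
        = lucas_quartic_closed_form m n - lucas_quartic_closed_form m (n - 1)" for n
      unfolding gsum_parity_start_diff lucas_quartic_closed_form_diff f0
      by (simp add: f_def power_int_minus_left)
    show "gsum f (if even 0 then 1 else 0) 0 = lucas_quartic_closed_form m 0"
      by (simp add: gsum_def lucas_quartic_closed_form_def F_def)
  qed
  then show ?thesis
    unfolding f_def lucas_quartic_closed_form_def .
qed

end
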